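(* Let $n\ge3$ and let $E$ be a closed subset of the unit ball $B_1\subset\mathbb{R}^n$ with $0\in E$ and $B_{1/4}\setminus E\neq\emptyset$. Assume there do NOT exist a point $x_0$, sequences $x_k,y_k,z_k\in B_{1/2}$, and constants $a>1$, $\beta>0$ such that: (1) $x_k,y_k\in E$, $z_k\notin E$, and $x_k,y_k,z_k\to x_0$; (2) with $r_k=|x_k-y_k|$, one has $\frac1ar_k<|x_k-z_k|<ar_k$ and $\frac1ar_k<|y_k-z_k|<ar_k$ for all $k$; (3) $V(x_k,B_{\beta r_k}(z_k))\subset B_1\setminus E$ and $V(y_k,B_{\beta r_k}(z_k))\subset B_1\setminus E$ for all $k$. Then $E\cap B_{1/4}$ is a finite set.
   Context: $B_r(x)$ is the Euclidean ball of radius $r$ centered at $x$, $B_r=B_r(0)$. For $x\in\mathbb{R}^n$ and a ball $B_r(x')$, $V(x,B_r(x'))=\{(1-t)x+ty:t\in(0,1),\ y\in B_r(x')\}$. *)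

theory Defs
  imports "HOL-Analysis.Analysis"
begin

definition cone_V :: "'a::real_vector \<Rightarrow> 'a set \<Rightarrow> 'a set" where
  "cone_V x S = {(1 - t) *\<^sub>R x + t *\<^sub>R y | t y. t \<in> {0<..<1} \<and> y \<in> S}"

end

theory Submission
  imports Defs
begin

(*
  Suppose E meets B_(1/4) in infinitely many points. Such points accumulate in the closed
  ball; either the accumulation point is already a boundary point of E, or, moving along the
  segment towards a point of B_(1/4) - E, one reaches a boundary point of the interior of E.
  Either way there is a point x0 that is an accumulation point of E and not interior to E.

  Near x0 pick w outside E and a nearest point u of E to w. In the punctured ball Omega
  around u, the set A of points whose distance to E is attained at u is nonempty (it contains
  points of the segment from u to w) and relatively closed. It is also relatively open unless
  the forbidden configuration occurs near x0: if v is in A and a point v' close to v has a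
  nearest point y different from u, then the E-free balls B(v, d(v,E)) and B(v', d(v',E))
  contain a common ball of radius |u - y|/4 whose centre is at distance comparable to
  |u - y| from u and y, and by convexity the cones from u and from y over that ball stay in
  these E-free balls. Since Omega is connected in dimension at least 2, A = Omega, which is
  absurd because Omega contains points of E. Shrinking the neighbourhood of x0 yields the
  excluded sequences.
*)

definition comparable_triangle :: "real \<Rightarrow> 'a::metric_space \<Rightarrow> 'a \<Rightarrow> 'a \<Rightarrow> bool" where
  "comparable_triangle a x y z \<longleftrightarrow>
     dist x y / a < dist x z \<and> dist x z < a * dist x y \<and>
     dist x y / a < dist y z \<and> dist y z < a * dist x y"

definition cone_configuration ::
    "real \<Rightarrow> real \<Rightarrow> 'a::real_normed_vector set \<Rightarrow> 'a set \<Rightarrow> 'a \<Rightarrow> 'a \<Rightarrow> 'a \<Rightarrow> bool" where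
  "cone_configuration a \<beta> U E x y z \<longleftrightarrow>
     x \<in> E \<and> y \<in> E \<and> z \<notin> E \<and> comparable_triangle a x y z \<and>
     cone_V x (ball z (\<beta> * dist x y)) \<subseteq> U - E \<and>
     cone_V y (ball z (\<beta> * dist x y)) \<subseteq> U - E"

lemma ball_subset_ball_dist:
  fixes c c' :: "'a::metric_space"
  assumes "dist c c' + r \<le> r'"
  shows "ball c r \<subseteq> ball c' r'"
proof
  fix p assume "p \<in> ball c r"
  then show "p \<in> ball c' r'"
    using assms dist_triangle[of c' p c] by (simp add: dist_commute)
qed

lemma cone_V_subset_ball:
  fixes x c :: "'a::real_normed_vector"
  assumes "dist c x \<le> R" and "S \<subseteq> ball c R"
  shows "cone_V x S \<subseteq> ball c R"
proof
  fix p assume "p \<in> cone_V x S"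
  then obtain t y where p: "p = (1 - t) *\<^sub>R x + t *\<^sub>R y" and t: "0 < t" "t < 1" and "y \<in> S"
    unfolding cone_V_def by auto
  then have cy: "dist c y < R" using assms(2) by auto
  have "c - p = (1 - t) *\<^sub>R (c - x) + t *\<^sub>R (c - y)"
    using p by (simp add: algebra_simps)
  then have "dist c p \<le> (1 - t) * dist c x + t * dist c y"
    using t norm_triangle_ineq[of "(1 - t) *\<^sub>R (c - x)" "t *\<^sub>R (c - y)"] by (simp add: dist_norm)
  also have "\<dots> < (1 - t) * R + t * R"
    using t assms(1) cy by (intro add_le_less_mono mult_left_mono mult_strict_left_mono) auto
  finally show "p \<in> ball c R" by (simp add: algebra_simps)
qed

lemma ball_infdist_disjoint: "ball x (infdist x A) \<inter> A = {}"
  using infdist_le[of _ A x] by fastforce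

lemma infdist_segment_to_nearest_point:
  fixes u w :: "'a::real_normed_vector"
  assumes "u \<in> A" and "infdist w A = dist w u" and "0 \<le> t" "t \<le> 1"
  shows "infdist (u + t *\<^sub>R (w - u)) A = t * dist w u"
proof (rule antisym)
  let ?p = "u + t *\<^sub>R (w - u)"
  show "infdist ?p A \<le> t * dist w u"
    using infdist_le[OF assms(1), of ?p] assms(3) by (simp add: dist_norm)
  have "w - ?p = (1 - t) *\<^sub>R (w - u)" by (simp add: algebra_simps)
  then have "dist w ?p = (1 - t) * dist w u" using assms(4) by (simp add: dist_norm)
  then show "t * dist w u \<le> infdist ?p A"
    using infdist_triangle[of w A ?p] assms(2) by (simp add: algebra_simps)
qed

lemma norm_diff_normalized_le:
  fixes a b :: "'a::real_normed_vector"
  assumes "a \<noteq> 0"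
  shows "norm (a /\<^sub>R norm a - b /\<^sub>R norm b) \<le> 2 * norm (a - b) / norm a"
proof -
  define c where "c = (norm b / norm a - 1) *\<^sub>R (b /\<^sub>R norm b)"
  have "a /\<^sub>R norm a - b /\<^sub>R norm b = (a - b) /\<^sub>R norm a + c"
    using assms by (cases "b = 0") (simp_all add: c_def algebra_simps divide_inverse)
  then have "norm (a /\<^sub>R norm a - b /\<^sub>R norm b) \<le> norm ((a - b) /\<^sub>R norm a) + norm c"
    by (metis norm_triangle_ineq)
  also have "norm ((a - b) /\<^sub>R norm a) = norm (a - b) / norm a"
    by (simp add: divide_inverse_commute)
  also have "norm c \<le> \<bar>norm b - norm a\<bar> / norm a"
    using assms by (cases "b = 0") (simp_all add: c_def abs_mult abs_minus_commute field_simps)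
  also have "\<bar>norm b - norm a\<bar> \<le> norm (a - b)"
    by (metis norm_minus_commute norm_triangle_ineq3)
  finally show ?thesis
    using assms by (simp add: divide_right_mono)
qed

context
  fixes x y v v' :: "'a::real_normed_vector" and d d' :: real
  assumes x_ne_y: "x \<noteq> y"
    and dist_vx: "dist v x = d" and dist_v'y: "dist v' y = d'"
    and x_nearest: "d \<le> dist v y" and y_nearest: "d' \<le> dist v' x"
    and v_v'_close: "dist v v' < d / 20"
begin

lemma nearest_radii_close: "\<bar>d' - d\<bar> \<le> dist v v'"
  using dist_triangle[of v y v'] dist_triangle[of v' x v] dist_vx dist_v'y x_nearest y_nearest
  by (simp add: dist_commute)

lemma nearest_radius_pos: "0 < d"
  using v_v'_close zero_le_dist[of v v'] by linarith

lemma common_ball_far: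
  assumes far: "d / 20 \<le> dist x y"
  shows "ball v (dist x y / 4) \<subseteq> ball v d \<inter> ball v' d' \<and> comparable_triangle 30 x y v"
proof -
  let ?r = "dist x y"
  have "?r \<le> dist x v + dist v y" by (rule dist_triangle)
  moreover have "dist v y \<le> dist v v' + d'"
    using dist_triangle[of v y v'] dist_v'y by simp
  ultimately have r_le: "?r \<le> 2 * d + 2 * dist v v'" and vy_le: "dist v y \<le> d + 2 * dist v v'"
    using nearest_radii_close dist_vx by (auto simp: dist_commute)
  have "ball v (?r / 4) \<subseteq> ball v d"
    using r_le v_v'_close nearest_radius_pos by (intro subset_ball) linarith
  moreover have "ball v (?r / 4) \<subseteq> ball v' d'"
    using r_le v_v'_close nearest_radii_close by (intro ball_subset_ball_dist) simp
  moreover have "comparable_triangle 30 x y v"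
    unfolding comparable_triangle_def
    using far r_le vy_le x_nearest v_v'_close dist_vx by (simp add: dist_commute)
  ultimately show ?thesis by blast
qed

lemma common_ball_near:
  assumes near: "dist x y < d / 20"
  defines "z \<equiv> x + (2 * dist x y / d) *\<^sub>R (v - x)"
  shows "ball z (dist x y / 4) \<subseteq> ball v d \<inter> ball v' d' \<and> comparable_triangle 30 x y z"
proof -
  let ?r = "dist x y"
  (* The analogous point for v' and y is close to z because the directions from x to v
     and from y to v' are close. *)
  define z' where "z' = y + (2 * ?r / d') *\<^sub>R (v' - y)"
  have r_pos: "0 < ?r" using x_ne_y by simp
  have d'_ge: "d' \<ge> 19 / 20 * d" using nearest_radii_close v_v'_close by linarith
  have r_le: "2 * ?r \<le> d" "2 * ?r \<le> d'" using near d'_ge r_pos by linarith+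
  have d_pos: "0 < d" "0 < d'" using r_pos r_le by linarith+
  have "dist v z = norm ((1 - 2 * ?r / d) *\<^sub>R (v - x))"
    by (simp add: dist_norm z_def algebra_simps)
  also have "\<dots> = \<bar>1 - 2 * ?r / d\<bar> * d"
    using dist_vx by (simp only: norm_scaleR dist_norm)
  also have "\<dots> = d - 2 * ?r"
    using d_pos r_le by (simp add: field_simps)
  finally have dist_vz: "dist v z = d - 2 * ?r" .
  have "dist v' z' = norm ((1 - 2 * ?r / d') *\<^sub>R (v' - y))"
    by (simp add: dist_norm z'_def algebra_simps)
  also have "\<dots> = \<bar>1 - 2 * ?r / d'\<bar> * d'"
    using dist_v'y by (simp only: norm_scaleR dist_norm)
  also have "\<dots> = d' - 2 * ?r"
    using d_pos r_le by (simp add: field_simps)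
  finally have dist_v'z': "dist v' z' = d' - 2 * ?r" .
  have xz: "dist x z = 2 * ?r"
    using dist_vx d_pos r_pos by (simp add: z_def dist_norm norm_minus_commute)
  let ?u = "(v - x) /\<^sub>R norm (v - x) - (v' - y) /\<^sub>R norm (v' - y)"
  have "v \<noteq> x" using dist_vx d_pos by auto
  then have "norm ?u \<le> 2 * norm ((v - x) - (v' - y)) / d"
    using norm_diff_normalized_le[of "v - x" "v' - y"] dist_vx by (simp add: dist_norm)
  also have "norm ((v - x) - (v' - y)) \<le> dist v v' + ?r"
    using norm_triangle_ineq4[of "v - v'" "x - y"] by (simp add: dist_norm algebra_simps)
  then have "2 * norm ((v - x) - (v' - y)) / d \<le> 2 * (dist v v' + ?r) / d"
    using d_pos by (simp add: divide_right_mono)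
  also have "\<dots> \<le> 1 / 5" using v_v'_close near d_pos by (simp add: field_simps)
  finally have u_small: "norm ?u \<le> 1 / 5" .
  have "z - z' = (x - y) + (2 * ?r) *\<^sub>R ?u"
    using dist_vx dist_v'y by (simp add: z_def z'_def dist_norm algebra_simps divide_inverse)
  then have "dist z z' \<le> ?r + 2 * ?r * norm ?u"
    using norm_triangle_ineq[of "x - y" "(2 * ?r) *\<^sub>R ?u"] r_pos by (simp add: dist_norm)
  also have "\<dots> \<le> ?r + 2 * ?r * (1 / 5)"
    using u_small r_pos by (intro add_left_mono mult_left_mono) auto
  finally have dist_zz': "dist z z' \<le> 7 / 5 * ?r" by simp
  have "ball z (?r / 4) \<subseteq> ball v d"
    using dist_vz r_pos by (intro ball_subset_ball_dist) (simp add: dist_commute)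
  moreover have "ball z (?r / 4) \<subseteq> ball z' (2 * ?r)"
    using dist_zz' r_pos by (intro ball_subset_ball_dist) linarith
  moreover have "ball z' (2 * ?r) \<subseteq> ball v' d'"
    using dist_v'z' by (intro ball_subset_ball_dist) (simp add: dist_commute)
  moreover have "?r \<le> dist y z" "dist y z \<le> 3 * ?r"
    using xz dist_triangle[of y z x] dist_triangle[of x z y] by (simp_all add: dist_commute)
  then have "comparable_triangle 30 x y z"
    unfolding comparable_triangle_def using xz r_pos by linarith
  ultimately show ?thesis by blast
qed

lemma common_ball_of_nearest_balls:
  "\<exists>z. ball z (dist x y / 4) \<subseteq> ball v d \<inter> ball v' d' \<and> comparable_triangle 30 x y z"
proof (cases "d / 20 \<le> dist x y")
  case True
  then show ?thesis using common_ball_far by blast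
next
  case False
  then show ?thesis using common_ball_near by (meson not_le)
qed

end

lemma cone_configuration_from_nearest_points:
  fixes E U :: "'a::real_normed_vector set"
  assumes "u \<in> E" "y \<in> E" "u \<noteq> y"
    and nearest_u: "infdist v E = dist v u" and nearest_y: "infdist v' E = dist v' y"
    and close: "dist v v' < dist v u / 20"
    and "ball v (dist v u) \<subseteq> U" "ball v' (dist v' y) \<subseteq> U"
  shows "\<exists>z \<in> ball v (dist v u). cone_configuration 30 (1/4) U E u y z"
proof -
  obtain z where z: "ball z (dist u y / 4) \<subseteq> ball v (dist v u) \<inter> ball v' (dist v' y)"
    and "comparable_triangle 30 u y z"
    using common_ball_of_nearest_balls[of u y v "dist v u" v' "dist v' y"] assms
      infdist_le[OF \<open>y \<in> E\<close>, of v] infdist_le[OF \<open>u \<in> E\<close>, of v']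
    by (auto simp: dist_commute)
  have free: "ball v (dist v u) \<subseteq> U - E" "ball v' (dist v' y) \<subseteq> U - E"
    using ball_infdist_disjoint[of v E] ball_infdist_disjoint[of v' E] assms by auto
  have "z \<in> ball z (dist u y / 4)" using \<open>u \<noteq> y\<close> by simp
  then have "z \<in> ball v (dist v u)" using z by blast
  moreover have "cone_V u (ball z (1/4 * dist u y)) \<subseteq> U - E"
    using cone_V_subset_ball[of v u "dist v u"] z free by auto
  moreover have "cone_V y (ball z (1/4 * dist u y)) \<subseteq> U - E"
    using cone_V_subset_ball[of v' y "dist v' y"] z free by auto
  ultimately show ?thesis
    using free(1) \<open>comparable_triangle 30 u y z\<close> assms(1,2)
    unfolding cone_configuration_def by blast
qed

(* The hypothesis no_config negates cone_configuration_near_limit_point below, which is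
   proved by contradiction. *)
context
  fixes E U :: "'a::euclidean_space set" and x0 u :: 'a and r :: real
  assumes closed: "closed E" and u_in: "u \<in> E" and u_near: "dist x0 u < r / 3"
    and ball_in_U: "ball x0 r \<subseteq> U"
    and no_config: "\<And>x y z. cone_configuration 30 (1/4) U E x y z \<Longrightarrow>
                      x \<in> ball x0 r \<Longrightarrow> y \<in> ball x0 r \<Longrightarrow> z \<in> ball x0 r \<Longrightarrow> False"
begin

lemma nearest_point_region_openin:
  "openin (top_of_set (ball u (r / 3) - {u})) {v \<in> ball u (r / 3) - {u}. infdist v E = dist v u}"
  unfolding openin_euclidean_subtopology_iff
proof (intro conjI ballI)
  let ?\<Omega> = "ball u (r / 3) - {u}"
  have near_x0: "dist x0 p < 2 * r / 3" if "p \<in> ?\<Omega>" for p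
    using that u_near dist_triangle[of x0 p u] by (simp add: dist_commute)
  fix v assume "v \<in> {v \<in> ?\<Omega>. infdist v E = dist v u}"
  then have v: "v \<in> ?\<Omega>" and nearest_u: "infdist v E = dist v u" by auto
  show "\<exists>e>0. \<forall>v'\<in>?\<Omega>. dist v' v < e \<longrightarrow> v' \<in> {v \<in> ?\<Omega>. infdist v E = dist v u}"
  proof (intro exI[of _ "dist v u / 20"] conjI ballI impI)
    show "0 < dist v u / 20" using v by simp
    fix v' assume v': "v' \<in> ?\<Omega>" and close: "dist v' v < dist v u / 20"
    obtain y where "y \<in> E" and nearest_y: "infdist v' E = dist v' y"
      using infdist_attains_inf[OF closed] u_in by blast
    have dist_v'y: "dist v' y < r / 3"
      using infdist_le[OF u_in, of v'] nearest_y v' by (simp add: dist_commute)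
    have "y = u"
    proof (rule ccontr)
      assume "y \<noteq> u"
      have "ball v (dist v u) \<subseteq> ball x0 r" "ball v' (dist v' y) \<subseteq> ball x0 r"
        using near_x0[OF v] near_x0[OF v'] v dist_v'y
        by (auto intro!: ball_subset_ball_dist simp: dist_commute)
      then obtain z where "z \<in> ball v (dist v u)" and "cone_configuration 30 (1/4) U E u y z"
        using cone_configuration_from_nearest_points[of u E y v v' U] u_in \<open>y \<in> E\<close> \<open>y \<noteq> u\<close>
          nearest_u nearest_y close ball_in_U by (force simp: dist_commute)
      moreover have "u \<in> ball x0 r" "y \<in> ball x0 r"
        unfolding mem_ball
        using u_near near_x0[OF v'] dist_v'y dist_triangle[of x0 y v'] zero_le_dist[of x0 u]
        by linarith+
      ultimately show False
        using no_config \<open>ball v (dist v u) \<subseteq> ball x0 r\<close> by blast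
    qed
    then show "v' \<in> {v \<in> ?\<Omega>. infdist v E = dist v u}" using v' nearest_y by simp
  qed
qed auto

end

lemma cone_configuration_near_limit_point:
  fixes E :: "'a::euclidean_space set"
  assumes dim: "2 \<le> DIM('a)" and closed: "closed E"
    and limpt: "x0 islimpt E" and not_interior: "x0 \<notin> interior E"
    and "0 < r" and ball_in_U: "ball x0 r \<subseteq> U"
  shows "\<exists>x y z. cone_configuration 30 (1/4) U E x y z \<and>
           x \<in> ball x0 r \<and> y \<in> ball x0 r \<and> z \<in> ball x0 r"
proof (rule ccontr)
  assume no_config: "\<not> ?thesis"
  have "x0 \<in> E" using closed limpt closed_limpt by blast
  have "\<not> ball x0 (r / 6) \<subseteq> E"
    using not_interior \<open>0 < r\<close> unfolding mem_interior by simp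
  then obtain w where "w \<notin> E" "dist x0 w < r / 6" by (meson mem_ball subsetI)
  obtain u where "u \<in> E" and nearest_w: "infdist w E = dist w u"
    using infdist_attains_inf[OF closed] \<open>x0 \<in> E\<close> by blast
  have "dist w u \<le> dist w x0" using infdist_le[OF \<open>x0 \<in> E\<close>, of w] nearest_w by simp
  then have u_near: "dist x0 u < r / 3"
    using dist_triangle[of x0 u w] \<open>dist x0 w < r / 6\<close> by (simp add: dist_commute)
  define \<Omega> where "\<Omega> = ball u (r / 3) - {u}"
  define A where "A = {v \<in> \<Omega>. infdist v E = dist v u}"
  have "A \<noteq> {}"
  proof -
    have "0 < dist w u" using \<open>w \<notin> E\<close> \<open>u \<in> E\<close> by auto
    define t where "t = min (dist w u) (r / 6) / dist w u"
    have "0 < t" "t \<le> 1" "t * dist w u < r / 3"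
      using \<open>0 < dist w u\<close> \<open>0 < r\<close> by (simp_all add: t_def)
    moreover have "infdist (u + t *\<^sub>R (w - u)) E = t * dist w u"
      using infdist_segment_to_nearest_point[OF \<open>u \<in> E\<close> nearest_w] \<open>0 < t\<close> \<open>t \<le> 1\<close> by simp
    ultimately have "u + t *\<^sub>R (w - u) \<in> A"
      using \<open>0 < dist w u\<close> by (simp add: A_def \<Omega>_def dist_norm)
    then show ?thesis by blast
  qed
  moreover have "closedin (top_of_set \<Omega>) A"
  proof -
    have "closed {v. infdist v E = dist v u}"
      by (intro closed_Collect_eq continuous_on_infdist continuous_on_dist continuous_on_id continuous_on_const)
    moreover have "A = \<Omega> \<inter> {v. infdist v E = dist v u}" by (auto simp: A_def)
    ultimately show ?thesis by (simp add: closedin_closed_Int)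
  qed
  moreover have "openin (top_of_set \<Omega>) A"
    unfolding A_def \<Omega>_def
    by (rule nearest_point_region_openin[OF closed \<open>u \<in> E\<close> u_near ball_in_U]) (use no_config in blast)
  ultimately have "A = \<Omega>"
    using connected_punctured_ball[OF dim, of u "r / 3"] unfolding connected_clopen \<Omega>_def by blast
  have "E \<inter> ball x0 (r / 3 - dist x0 u) \<subseteq> E \<inter> ball u (r / 3)"
    using ball_subset_ball_dist[of x0 u "r / 3 - dist x0 u" "r / 3"] by auto
  moreover have "infinite (E \<inter> ball x0 (r / 3 - dist x0 u))"
    using limpt u_near unfolding islimpt_eq_infinite_ball by simp
  ultimately have "infinite (E \<inter> ball u (r / 3))"
    by (rule infinite_super)
  moreover have "E \<inter> \<Omega> = E \<inter> ball u (r / 3) - {u}" by (auto simp: \<Omega>_def)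
  ultimately have "infinite (E \<inter> \<Omega>)" by simp
  then obtain q where "q \<in> E" "q \<in> \<Omega>" using infinite_imp_nonempty by blast
  then have "infdist q E = dist q u" using \<open>A = \<Omega>\<close> unfolding A_def by blast
  then show False using \<open>q \<in> E\<close> \<open>q \<in> \<Omega>\<close> by (simp add: \<Omega>_def)
qed

lemma limit_point_not_interior_in_convex_compact:
  fixes E K :: "'a::euclidean_space set"
  assumes "closed E" "compact K" "convex K" "infinite (E \<inter> K)" "K - E \<noteq> {}"
  shows "\<exists>x0 \<in> K. x0 islimpt E \<and> x0 \<notin> interior E"
proof -
  obtain a where "a \<in> K" "a islimpt E \<inter> K"
    using Heine_Borel_imp_Bolzano_Weierstrass[OF assms(2,4)] by blast
  then have "a islimpt E" using islimpt_subset by blast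
  show ?thesis
  proof (cases "a \<in> interior E")
    case False
    then show ?thesis using \<open>a \<in> K\<close> \<open>a islimpt E\<close> by blast
  next
    case True
    obtain p where "p \<in> K" "p \<notin> E" using assms(5) by blast
    have "closed_segment a p \<inter> frontier (interior E) \<noteq> {}"
      using True \<open>p \<notin> E\<close> interior_subset
      by (intro connected_Int_frontier connected_segment) auto
    then obtain x0 where x0: "x0 \<in> closed_segment a p" "x0 \<in> frontier (interior E)" by blast
    then have "x0 \<in> K" using assms(3) \<open>a \<in> K\<close> \<open>p \<in> K\<close> closed_segment_subset by blast
    moreover have "x0 \<notin> interior E" using x0(2) by (simp add: frontier_def)
    moreover have "x0 islimpt interior E"
      using x0(2) \<open>x0 \<notin> interior E\<close> by (auto simp: frontier_def closure_def)
    then have "x0 islimpt E" using islimpt_subset interior_subset by blast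
    ultimately show ?thesis by blast
  qed
qed

lemma LIMSEQ_dist_less_null:
  assumes "\<And>k. dist (X k) x0 < \<rho> k" and "\<rho> \<longlonglongrightarrow> 0"
  shows "X \<longlonglongrightarrow> x0"
proof (rule tendsto_dist_iff[THEN iffD2], rule Lim_null_comparison[OF _ assms(2)])
  show "\<forall>\<^sub>F k in sequentially. norm (dist (X k) x0) \<le> \<rho> k"
    using assms(1) by (intro always_eventually allI) (simp add: less_imp_le)
qed

lemma cone_configuration_sequence_near_limit_point:
  fixes E :: "'a::euclidean_space set"
  assumes "2 \<le> DIM('a)" "closed E" "x0 islimpt E" "x0 \<notin> interior E"
    and "0 < r" "ball x0 r \<subseteq> U"
  obtains xs ys zs where "\<And>k. cone_configuration 30 (1/4) U E (xs k) (ys k) (zs k)"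
    and "\<And>k. xs k \<in> ball x0 r \<and> ys k \<in> ball x0 r \<and> zs k \<in> ball x0 r"
    and "xs \<longlonglongrightarrow> x0" "ys \<longlonglongrightarrow> x0" "zs \<longlonglongrightarrow> x0"
proof -
  define \<rho> where "\<rho> = (\<lambda>k. r * inverse (real (Suc k)))"
  have \<rho>_pos: "0 < \<rho> k" and \<rho>_le: "\<rho> k \<le> r" for k
    using \<open>0 < r\<close> by (simp_all add: \<rho>_def mult_le_cancel_left1 inverse_le_1_iff)
  have "\<exists>x y z. cone_configuration 30 (1/4) U E x y z \<and>
      x \<in> ball x0 (\<rho> k) \<and> y \<in> ball x0 (\<rho> k) \<and> z \<in> ball x0 (\<rho> k)" for k
    using subset_ball[OF \<rho>_le] assms(6)
    by (intro cone_configuration_near_limit_point[OF assms(1-4) \<rho>_pos]) blast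
  then obtain xs ys zs where config: "\<And>k. cone_configuration 30 (1/4) U E (xs k) (ys k) (zs k)"
    and near: "\<And>k. xs k \<in> ball x0 (\<rho> k) \<and> ys k \<in> ball x0 (\<rho> k) \<and> zs k \<in> ball x0 (\<rho> k)"
    by metis
  have "\<rho> \<longlonglongrightarrow> 0"
    unfolding \<rho>_def by (rule tendsto_mult_right_zero[OF LIMSEQ_inverse_real_of_nat])
  then have "xs \<longlonglongrightarrow> x0" "ys \<longlonglongrightarrow> x0" "zs \<longlonglongrightarrow> x0"
    using near by (auto intro!: LIMSEQ_dist_less_null[of _ _ \<rho>] simp: dist_commute)
  moreover have "xs k \<in> ball x0 r \<and> ys k \<in> ball x0 r \<and> zs k \<in> ball x0 r" for k
    using near[of k] subset_ball[OF \<rho>_le[of k]] by blast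
  ultimately show ?thesis by (rule that[OF config, rotated])
qed

theorem lemma4p1:
  fixes E :: "'a::euclidean_space set"
  assumes "DIM('a) \<ge> 3"
    and "closed E" and "E \<subseteq> ball 0 1" and "0 \<in> E"
    and "ball 0 (1/4) - E \<noteq> {}"
    and "\<not> (\<exists>(x0::'a) (xs::nat \<Rightarrow> 'a) ys zs (a::real) (\<beta>::real).
            a > 1 \<and> \<beta> > 0 \<and>
            (\<forall>k. xs k \<in> ball 0 (1/2) \<and> ys k \<in> ball 0 (1/2) \<and> zs k \<in> ball 0 (1/2)) \<and>
            (\<forall>k. xs k \<in> E \<and> ys k \<in> E \<and> zs k \<notin> E) \<and>
            xs \<longlonglongrightarrow> x0 \<and> ys \<longlonglongrightarrow> x0 \<and> zs \<longlonglongrightarrow> x0 \<and>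
            (\<forall>k. dist (xs k) (ys k) / a < dist (xs k) (zs k) \<and>
                 dist (xs k) (zs k) < a * dist (xs k) (ys k) \<and>
                 dist (xs k) (ys k) / a < dist (ys k) (zs k) \<and>
                 dist (ys k) (zs k) < a * dist (xs k) (ys k)) \<and>
            (\<forall>k. cone_V (xs k) (ball (zs k) (\<beta> * dist (xs k) (ys k))) \<subseteq> ball 0 1 - E \<and>
                 cone_V (ys k) (ball (zs k) (\<beta> * dist (xs k) (ys k))) \<subseteq> ball 0 1 - E))"
  shows "finite (E \<inter> ball 0 (1/4))"
proof (rule ccontr)
  assume "infinite (E \<inter> ball 0 (1/4))"
  then have "infinite (E \<inter> cball 0 (1/4))"
    by (meson Int_mono ball_subset_cball infinite_super order_refl)
  moreover have "cball 0 (1/4) - E \<noteq> {}" using assms(5) ball_subset_cball by blast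
  ultimately obtain x0 :: 'a where "x0 \<in> cball 0 (1/4)" "x0 islimpt E" "x0 \<notin> interior E"
    using limit_point_not_interior_in_convex_compact[OF assms(2) compact_cball convex_cball] by blast
  have dim: "2 \<le> DIM('a)" using assms(1) by simp
  have half: "ball x0 (1/4) \<subseteq> ball 0 (1/2)" and "ball x0 (1/4) \<subseteq> ball 0 1"
    using \<open>x0 \<in> cball 0 (1/4)\<close> by (intro ball_subset_ball_dist, simp)+
  obtain xs ys zs
    where config: "\<And>k. cone_configuration 30 (1/4) (ball 0 1) E (xs k) (ys k) (zs k)"
      and near: "\<And>k. xs k \<in> ball x0 (1/4) \<and> ys k \<in> ball x0 (1/4) \<and> zs k \<in> ball x0 (1/4)"
      and conv: "xs \<longlonglongrightarrow> x0" "ys \<longlonglongrightarrow> x0" "zs \<longlonglongrightarrow> x0"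
    by (rule cone_configuration_sequence_near_limit_point[OF dim assms(2) \<open>x0 islimpt E\<close>
          \<open>x0 \<notin> interior E\<close> _ \<open>ball x0 (1/4) \<subseteq> ball 0 1\<close>]) (simp, blast)
  have in_half_ball: "xs k \<in> ball 0 (1/2) \<and> ys k \<in> ball 0 (1/2) \<and> zs k \<in> ball 0 (1/2)" for k
    using near[of k] half by blast
  show False
    by (rule notE[OF assms(6)], rule exI[of _ x0], rule exI[of _ xs], rule exI[of _ ys],
        rule exI[of _ zs], rule exI[of _ 30], rule exI[of _ "1/4"])
      (use config conv in_half_ball in \<open>simp add: cone_configuration_def comparable_triangle_def\<close>)
qed

end
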